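(* For each $\sigma \in (\frac12,1)$ let $c_\sigma>0$ and $f_\sigma:(0,\infty)\to(0,1)$ be determined by: $f_\sigma$ is the unique continuous solution with values in $(0,1)$ of \[ \frac{f_\sigma(x)}{(1-f_\sigma(x)^2)^2} = \left(\frac{c_\sigma}{x}\right)^\sigma, \qquad \text{and} \qquad \int_0^\infty \frac{f_\sigma(x)^2}{1-f_\sigma(x)^2}\,dx = 1.\] Then for each $\sigma\in(\frac12,1)$: (1) $f_\sigma$ is smooth, decreasing, and a bijection $(0,\infty) \to (0,1)$. (2) $f_\sigma(x) \leq \left(\frac{c_\sigma}{x}\right)^\sigma$ for all $x>0$. (3) $\min\left(\frac{1}{2}, \frac{1}{4}\left(\frac{x}{c_\sigma}\right)^{\sigma/2}\right) \leq 1 - f_\sigma(x) \leq \left(\frac{x}{c_\sigma}\right)^{\sigma/2}$ for all $x>0$. (4) $c_\sigma = \dfrac{\Gamma(\frac{3}{2\sigma})}{\Gamma(1 - \frac{1}{2\sigma})\Gamma(\frac{2}{\sigma}-1)}$; in particular $c_\sigma <1$, $c_\sigma \to \frac{1}{2}$ as $\sigma \uparrow 1$, and $c_\sigma \sim 2\sigma - 1$ as $\sigma \downarrow \frac12$. (5) The Mellin transform $\hat{f}_\sigma(s) =\int_0^\infty f_\sigma(x) x^{s-1}dx$ converges absolutely in $0 < \Re(s) < \sigma$ and equals \[\hat{f}_\sigma(s) = \frac{c_\sigma^s}{2s}\,\frac{\Gamma(\frac{1}{2} - \frac{s}{2\sigma})\Gamma(\frac{2s}{\sigma} + 1)}{\Gamma(\frac{3}{2}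 + \frac{3s}{2\sigma})};\] in particular $\hat{f}_\sigma(1-\sigma) = \frac{1}{2(1-\sigma)}c_\sigma^{-\sigma}$. (6) With $g_\sigma(x) = \frac{f_\sigma(x)^2}{1-f_\sigma(x)^2}$, the integral $\hat{g}_\sigma(s) = \int_0^\infty g_\sigma(x)x^{s-1}dx$ converges absolutely in $\frac{\sigma}{2} < \Re(s) < 2\sigma$ and equals \[\hat{g}_\sigma(s) = \frac{c_\sigma^s}{s}\,\frac{\Gamma(1 -\frac{s}{2\sigma})\Gamma(\frac{2s}{\sigma} - 1)}{\Gamma(\frac{3s}{2\sigma})}.\] *)

theory Defs
  imports "HOL-Analysis.Analysis" "HOL-Library.Landau_Symbols"
begin

definition smooth_on_real :: "real set \<Rightarrow> (real \<Rightarrow> real) \<Rightarrow> bool" where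
  "smooth_on_real S f \<longleftrightarrow> (\<forall>n. \<forall>x\<in>S. ((deriv ^^ n) f) differentiable (at x))"

definition c_formula :: "real \<Rightarrow> real" where
  "c_formula \<sigma> = Gamma (3 / (2*\<sigma>)) / (Gamma (1 - 1/(2*\<sigma>)) * Gamma (2/\<sigma> - 1))"

end

theory Submission
  imports Defs
begin

text \<open>
  The profile equation determines \<open>f\<close> as the inverse of the explicit function
  \<open>X y = c * ((1 - y^2)^2 / y) powr (1/\<sigma>)\<close>, which is smooth and strictly decreasing on
  \<open>(0, 1)\<close>. Monotonicity, bijectivity and the pointwise bounds are then elementary, and
  smoothness follows order by order from the inverse function rule \<open>f' = 1 / X'(f)\<close>.

  For the Mellin transforms substitute \<open>x = X (sqrt v)\<close> with \<open>0 < v < 1\<close>. The Jacobian is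
  \<open>X (sqrt v) * (1 + 3 v) / (2 \<sigma> v (1 - v))\<close>, so \<open>\<integral> K (f x) x^(s-1) dx\<close> becomes
  \<open>c^s / (2 \<sigma>) * \<integral>\<^sub>0\<^sup>1 K (sqrt v) (1 + 3 v) v^(-s/(2 \<sigma>) - 1) (1 - v)^(2 s/\<sigma> - 1) dv\<close>.
  For \<open>K y = y\<close> and \<open>K y = y^2 / (1 - y^2)\<close> this is a combination of two Beta integrals that
  collapses to \<open>(4 p + q) / (p + q) * B(p, q)\<close>. The normalisation \<open>\<integral> g = 1\<close> is the value of
  the transform of \<open>g\<close> at \<open>s = 1\<close> and pins down \<open>c\<close>. The Beta integral with complex
  parameters comes from \<open>\<Gamma>(p) \<Gamma>(q) = \<Gamma>(p + q) \<integral>\<^sub>0\<^sup>\<infinity> y^(q-1) (1 + y)^(-p-q) dy\<close>,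
  which is Fubini applied to \<open>t^(p+q-1) y^(q-1) exp (- t (1 + y))\<close>.
\<close>

section \<open>Gamma and Beta integrals with complex parameters\<close>

lemma absolutely_integrable_imp_set_integrable_lborel:
  fixes f :: "'a::euclidean_space \<Rightarrow> 'b::euclidean_space"
  assumes "f absolutely_integrable_on S" "continuous_on S f" "open S"
  shows "set_integrable lborel S f"
proof -
  have "(\<lambda>x. indicator S x *\<^sub>R f x) \<in> borel_measurable borel"
    using assms by (intro borel_measurable_continuous_on_indicator) auto
  then show ?thesis
    using assms(1) unfolding set_integrable_def by (subst (asm) integrable_completion) auto
qed

lemma set_integrable_lborel_imp_absolutely_integrable:
  fixes f :: "'a::euclidean_space \<Rightarrow> 'b::euclidean_space"
  assumes "set_integrable lborel S f"
  shows "f absolutely_integrable_on S"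
proof -
  from assms have "(\<lambda>x. indicator S x *\<^sub>R f x) \<in> borel_measurable lborel"
    unfolding set_integrable_def by (rule borel_measurable_integrable)
  with assms show ?thesis
    unfolding set_integrable_def by (subst integrable_completion) auto
qed

lemma set_integrable_complex_of_real_iff:
  "set_integrable M S (\<lambda>x. complex_of_real (f x)) \<longleftrightarrow> set_integrable M S f"
  unfolding set_integrable_def
  by (subst complex_of_real_integrable_eq[symmetric]) (simp add: scaleR_conv_of_real)

lemma complex_powr_real_eq_exp_ln: "x > 0 \<Longrightarrow> complex_of_real x powr w = exp (w * of_real (ln x))"
  by (simp add: powr_def Ln_of_real)

lemma complex_powr_real_mult: "x > 0 \<Longrightarrow> complex_of_real x powr (a + b) = of_real x powr a * of_real x powr b"
  by (simp add: complex_powr_real_eq_exp_ln exp_add distrib_right)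

lemma complex_powr_real_add_one:
  "x > 0 \<Longrightarrow> complex_of_real x powr (a + 1) = of_real x * of_real x powr a"
  by (simp add: complex_powr_real_eq_exp_ln exp_add distrib_right exp_of_real)

lemma complex_powr_real_add_half:
  assumes "x > 0"
  shows "complex_of_real x powr (a + 1/2) = of_real (sqrt x) * of_real x powr a"
proof -
  have "exp (complex_of_real (ln x) / 2) = of_real (exp (ln x / 2))"
    by (metis exp_of_real of_real_divide of_real_numeral)
  also have "exp (ln x / 2) = sqrt x"
    using assms by (simp add: ln_sqrt[symmetric])
  finally have half: "exp (complex_of_real (ln x) / 2) = of_real (sqrt x)" .
  have "complex_of_real x powr (a + 1/2) = exp (a * of_real (ln x) + of_real (ln x) / 2)"
    using assms by (simp add: complex_powr_real_eq_exp_ln algebra_simps)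
  also have "\<dots> = of_real (sqrt x) * of_real x powr a"
    using assms by (simp add: exp_add half complex_powr_real_eq_exp_ln mult.commute)
  finally show ?thesis .
qed

lemma complex_set_integral_real_powr:
  fixes g :: "real \<Rightarrow> real"
  shows "(LINT x:{0<..}|lborel. complex_of_real (g x) * of_real x powr (of_real r - 1)) =
         of_real (LINT x:{0<..}|lborel. g x * x powr (r - 1))"
proof -
  have "(LINT x:{0<..}|lborel. complex_of_real (g x) * of_real x powr (of_real r - 1)) =
      (LINT x:{0<..}|lborel. complex_of_real (g x * x powr (r - 1)))"
    by (intro set_lebesgue_integral_cong) (auto simp: powr_of_real[symmetric])
  then show ?thesis
    by (simp only: set_integral_complex_of_real)
qed

lemma Gamma_integral_scaled:
  assumes z: "Re z > 0" and a: "a > 0"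
  shows "set_integrable lborel {0<..} (\<lambda>t. of_real t powr (z - 1) / of_real (exp (a * t)))"
    and "(LINT t:{0<..}|lborel. of_real t powr (z - 1) / of_real (exp (a * t))) = Gamma z / of_real a powr z"
proof -
  define h where "h u = indicator {0<..} u *\<^sub>R (complex_of_real u powr (z - 1) / of_real (exp u))" for u
  have "set_integrable lborel {0<..} (\<lambda>u. complex_of_real u powr (z - 1) / of_real (exp u))"
    by (intro absolutely_integrable_imp_set_integrable_lborel absolutely_integrable_Gamma_integral'
          continuous_intros z) auto
  then have h_int: "integrable lborel h"
    unfolding h_def set_integrable_def .
  have h_Gamma: "integral\<^sup>L lborel h = Gamma z"
    using set_borel_integral_eq_integral(2)[OF \<open>set_integrable _ _ _\<close>] Gamma_integral_complex'[OF z]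
    unfolding h_def set_lebesgue_integral_def by (simp add: integral_unique)
  have h_scaled: "h (a * t) = of_real a powr (z - 1) *
      (indicator {0<..} t *\<^sub>R (of_real t powr (z - 1) / of_real (exp (a * t))))" for t
    using a by (cases "t > 0") (simp_all add: h_def powr_times_real indicator_def zero_less_mult_iff)
  have "integrable lborel (\<lambda>t. h (a * t))"
    using lborel_integrable_real_affine[OF h_int, of a 0] a by simp
  then have "set_integrable lborel {0<..}
      (\<lambda>t. of_real a powr (z - 1) * (of_real t powr (z - 1) / of_real (exp (a * t))))"
    unfolding h_scaled set_integrable_def by (simp add: scaleR_conv_of_real mult_ac)
  then show "set_integrable lborel {0<..} (\<lambda>t. of_real t powr (z - 1) / of_real (exp (a * t)))"
    using a by (subst (asm) set_integrable_mult_right_iff) auto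
  have "Gamma z = of_real a * (\<integral>t. h (a * t) \<partial>lborel)"
    using lborel_integral_real_affine[of a h 0] a h_Gamma by (simp add: scaleR_conv_of_real)
  also have "(\<integral>t. h (a * t) \<partial>lborel) = of_real a powr (z - 1) *
      (LINT t:{0<..}|lborel. of_real t powr (z - 1) / of_real (exp (a * t)))"
    unfolding h_scaled set_lebesgue_integral_def by (rule integral_mult_right_zero)
  also have "of_real a * (of_real a powr (z - 1) * I) = of_real a powr z * I" for I
    using complex_powr_real_mult[OF a, of 1 "z - 1"] a by (simp add: powr_of_real)
  finally show "(LINT t:{0<..}|lborel. of_real t powr (z - 1) / of_real (exp (a * t))) = Gamma z / of_real a powr z"
    using a by (simp add: field_simps)
qed

lemma Gamma_integral_scaled_real:
  fixes r a :: real
  assumes r: "r > 0" and a: "a > 0"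
  shows "set_integrable lborel {0<..} (\<lambda>t. t powr (r - 1) / exp (a * t))"
    and "(LINT t:{0<..}|lborel. t powr (r - 1) / exp (a * t)) = Gamma r / a powr r"
proof -
  have eq: "complex_of_real t powr (of_real r - 1) / of_real (exp (a * t)) =
      of_real (t powr (r - 1) / exp (a * t))" if "t \<in> {0<..}" for t
    using that by (simp add: powr_of_real[symmetric])
  have "set_integrable lborel {0<..} (\<lambda>t. complex_of_real t powr (of_real r - 1) / of_real (exp (a * t)))
      \<longleftrightarrow> set_integrable lborel {0<..} (\<lambda>t. complex_of_real (t powr (r - 1) / exp (a * t)))"
    by (intro set_integrable_cong refl eq)
  with Gamma_integral_scaled(1)[of "of_real r" a] r a
  have "set_integrable lborel {0<..} (\<lambda>t. complex_of_real (t powr (r - 1) / exp (a * t)))"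
    by simp
  then show "set_integrable lborel {0<..} (\<lambda>t. t powr (r - 1) / exp (a * t))"
    by (simp only: set_integrable_complex_of_real_iff)
  have "complex_of_real (LINT t:{0<..}|lborel. t powr (r - 1) / exp (a * t)) =
      (LINT t:{0<..}|lborel. complex_of_real (t powr (r - 1) / exp (a * t)))"
    by (rule set_integral_complex_of_real[symmetric])
  also have "\<dots> = (LINT t:{0<..}|lborel. complex_of_real t powr (of_real r - 1) / of_real (exp (a * t)))"
    by (intro set_lebesgue_integral_cong) (auto simp: eq)
  also have "\<dots> = Gamma (of_real r) / of_real a powr of_real r"
    using r a by (intro Gamma_integral_scaled(2)) auto
  also have "\<dots> = of_real (Gamma r / a powr r)"
    using a by (simp add: Gamma_complex_of_real powr_of_real)
  finally show "(LINT t:{0<..}|lborel. t powr (r - 1) / exp (a * t)) = Gamma r / a powr r"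
    by (simp only: of_real_eq_iff)
qed

lemma Fubini_set_integral_quadrant:
  fixes G :: "real \<Rightarrow> real \<Rightarrow> 'a::euclidean_space"
  assumes cont: "continuous_on ({0<..} \<times> {0<..}) (\<lambda>(t, y). G t y)"
    and inner: "\<And>t. t > 0 \<Longrightarrow> set_integrable lborel {0<..} (G t)"
    and norm_int: "set_integrable lborel {0<..} (\<lambda>t. LINT y:{0<..}|lborel. norm (G t y))"
  shows "set_integrable lborel {0<..} (\<lambda>y. LINT t:{0<..}|lborel. G t y)"
    and "(LINT y:{0<..}|lborel. LINT t:{0<..}|lborel. G t y) =
         (LINT t:{0<..}|lborel. LINT y:{0<..}|lborel. G t y)"
proof -
  define F where "F z = indicator ({0<..} \<times> {0<..}) z *\<^sub>R G (fst z) (snd z)" for z :: "real \<times> real"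
  have F_eq: "F (t, y) = indicator {0<..} t *\<^sub>R (indicator {0<..} y *\<^sub>R G t y)" for t y
    by (simp add: F_def indicator_def)
  have "F \<in> borel_measurable borel"
    unfolding F_def using cont
    by (intro borel_measurable_continuous_on_indicator) (auto simp: open_Times case_prod_unfold)
  also have "borel_measurable borel = borel_measurable (lborel \<Otimes>\<^sub>M lborel)"
    by (rule measurable_cong_sets) (simp_all add: borel_prod[symmetric])
  finally have meas: "F \<in> borel_measurable (lborel \<Otimes>\<^sub>M lborel)" .
  have "(\<integral>y. norm (F (t, y)) \<partial>lborel) = indicator {0<..} t * (LINT y:{0<..}|lborel. norm (G t y))" for t
    unfolding F_eq set_lebesgue_integral_def by (simp add: indicator_def)
  then have "integrable lborel (\<lambda>t. \<integral>y. norm (F (t, y)) \<partial>lborel)"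
    using norm_int unfolding set_integrable_def by simp
  moreover have "AE t in lborel. integrable lborel (\<lambda>y. F (t, y))"
    using inner unfolding F_eq set_integrable_def by (intro AE_I2) (simp add: indicator_def)
  ultimately have int: "integrable (lborel \<Otimes>\<^sub>M lborel) (\<lambda>(t, y). F (t, y))"
    using lborel_pair.Fubini_integrable[OF meas] by simp
  have inner_t: "(\<integral>t. F (t, y) \<partial>lborel) = indicator {0<..} y *\<^sub>R (LINT t:{0<..}|lborel. G t y)" for y
    unfolding F_eq set_lebesgue_integral_def by (simp add: indicator_def)
  have inner_y: "(\<integral>y. F (t, y) \<partial>lborel) = indicator {0<..} t *\<^sub>R (LINT y:{0<..}|lborel. G t y)" for t
    unfolding F_eq set_lebesgue_integral_def by (simp add: indicator_def)
  show "set_integrable lborel {0<..} (\<lambda>y. LINT t:{0<..}|lborel. G t y)"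
    using lborel_pair.integrable_snd[OF int] unfolding inner_t set_integrable_def .
  have "(\<integral>y. (\<integral>t. F (t, y) \<partial>lborel) \<partial>lborel) = (\<integral>t. (\<integral>y. F (t, y) \<partial>lborel) \<partial>lborel)"
    using int by (rule lborel_pair.Fubini_integral)
  then show "(LINT y:{0<..}|lborel. LINT t:{0<..}|lborel. G t y) =
         (LINT t:{0<..}|lborel. LINT y:{0<..}|lborel. G t y)"
    unfolding inner_t inner_y set_lebesgue_integral_def .
qed

lemma Gamma_Re_pos_nonzero: "Re z > 0 \<Longrightarrow> Gamma z \<noteq> 0"
  by (auto simp: Gamma_eq_zero_iff elim!: nonpos_Ints_cases)

lemma Beta_kernel_integrable_real:
  fixes a b :: real
  assumes a: "a > 0" and b: "b > 0"
  shows "set_integrable lborel {0<..}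
           (\<lambda>t. LINT y:{0<..}|lborel. t powr (a + b - 1) * y powr (b - 1) / exp (t * (1 + y)))"
proof -
  have "(LINT y:{0<..}|lborel. t powr (a + b - 1) * y powr (b - 1) / exp (t * (1 + y))) =
      Gamma b * (t powr (a - 1) / exp t)" if t: "t > 0" for t
  proof -
    have "(LINT y:{0<..}|lborel. t powr (a + b - 1) * y powr (b - 1) / exp (t * (1 + y))) =
        (LINT y:{0<..}|lborel. t powr (a + b - 1) / exp t * (y powr (b - 1) / exp (t * y)))"
      by (intro set_lebesgue_integral_cong) (auto simp: exp_add field_simps)
    also have "\<dots> = t powr (a + b - 1) / exp t * (Gamma b / t powr b)"
      by (simp only: set_integral_mult_right Gamma_integral_scaled_real(2)[OF b t])
    also have "\<dots> = Gamma b * (t powr (a - 1) / exp t)"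
      using t by (simp add: powr_diff powr_add field_simps)
    finally show ?thesis .
  qed
  moreover have "set_integrable lborel {0<..} (\<lambda>t. Gamma b * (t powr (a - 1) / exp t))"
    using Gamma_integral_scaled_real(1)[OF a zero_less_one] by (intro set_integrable_mult_right) simp
  ultimately show ?thesis
    by (subst set_integrable_cong[OF refl refl]) auto
qed

lemma Beta_integral_halfline:
  assumes p: "Re p > 0" and q: "Re q > 0"
  shows "set_integrable lborel {0<..} (\<lambda>y. of_real y powr (q - 1) / of_real (1 + y) powr (p + q))"
    and "(LINT y:{0<..}|lborel. of_real y powr (q - 1) / of_real (1 + y) powr (p + q)) =
         Gamma p * Gamma q / Gamma (p + q)"
proof -
  define G where "G t y = of_real t powr (p + q - 1) * of_real y powr (q - 1) / of_real (exp (t * (1 + y)))"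
    for t y :: real
  have pq: "Re (p + q) > 0"
    using p q by simp
  have G_y: "set_integrable lborel {0<..} (G t)"
    "(LINT y:{0<..}|lborel. G t y) = Gamma q * (of_real t powr (p - 1) / of_real (exp t))" if t: "t > 0" for t
  proof -
    have G_eq: "G t y = of_real t powr (p + q - 1) / of_real (exp t) * (of_real y powr (q - 1) / of_real (exp (t * y)))" for y
      by (simp add: G_def algebra_simps exp_add)
    show "set_integrable lborel {0<..} (G t)"
      unfolding G_eq using Gamma_integral_scaled(1)[OF q t] by (rule set_integrable_mult_right)
    have "of_real t powr (p + q - 1) / of_real (exp t) * (Gamma q / of_real t powr q) =
        Gamma q * (of_real t powr (p - 1) / of_real (exp t))"
      using t by (simp add: powr_diff powr_add field_simps)
    then show "(LINT y:{0<..}|lborel. G t y) = Gamma q * (of_real t powr (p - 1) / of_real (exp t))"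
      unfolding G_eq set_integral_mult_right Gamma_integral_scaled(2)[OF q t] .
  qed
  have G_t: "(LINT t:{0<..}|lborel. G t y) = Gamma (p + q) * (of_real y powr (q - 1) / of_real (1 + y) powr (p + q))"
    if y: "y > 0" for y
  proof -
    have G_eq: "G t y = of_real y powr (q - 1) * (of_real t powr (p + q - 1) / of_real (exp ((1 + y) * t)))" for t
      by (simp add: G_def algebra_simps)
    have y1: "1 + y > 0"
      using y by simp
    show ?thesis
      unfolding G_eq set_integral_mult_right Gamma_integral_scaled(2)[OF pq y1] by simp
  qed
  have "(LINT y:{0<..}|lborel. norm (G t y)) =
      (LINT y:{0<..}|lborel. t powr (Re p + Re q - 1) * y powr (Re q - 1) / exp (t * (1 + y)))" if "t > 0" for t
    using that by (intro set_lebesgue_integral_cong) (auto simp: G_def norm_mult norm_divide norm_powr_real_powr)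
  then have norm_int: "set_integrable lborel {0<..} (\<lambda>t. LINT y:{0<..}|lborel. norm (G t y))"
    using Beta_kernel_integrable_real[of "Re p" "Re q"] p q
    by (subst set_integrable_cong[OF refl refl]) auto
  have cont: "continuous_on ({0<..} \<times> {0<..}) (\<lambda>(t, y). G t y)"
    unfolding G_def case_prod_unfold by (intro continuous_intros) auto
  note Fubini = Fubini_set_integral_quadrant[OF cont G_y(1) norm_int]
  have Gpq: "Gamma (p + q) \<noteq> 0"
    using pq by (rule Gamma_Re_pos_nonzero)
  have "set_integrable lborel {0<..} (\<lambda>y. LINT t:{0<..}|lborel. G t y)"
    by (rule Fubini(1))
  also have "?this \<longleftrightarrow> set_integrable lborel {0<..}
      (\<lambda>y. Gamma (p + q) * (of_real y powr (q - 1) / of_real (1 + y) powr (p + q)))"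
    by (intro set_integrable_cong) (auto simp: G_t)
  finally have "set_integrable lborel {0<..}
      (\<lambda>y. Gamma (p + q) * (of_real y powr (q - 1) / of_real (1 + y) powr (p + q)))" .
  then show "set_integrable lborel {0<..} (\<lambda>y. of_real y powr (q - 1) / of_real (1 + y) powr (p + q))"
    using Gpq by (subst (asm) set_integrable_mult_right_iff) auto
  have "Gamma (p + q) * (LINT y:{0<..}|lborel. of_real y powr (q - 1) / of_real (1 + y) powr (p + q)) =
      (LINT y:{0<..}|lborel. LINT t:{0<..}|lborel. G t y)"
    unfolding set_integral_mult_right[symmetric] by (intro set_lebesgue_integral_cong) (auto simp: G_t)
  also have "\<dots> = (LINT t:{0<..}|lborel. LINT y:{0<..}|lborel. G t y)"
    by (rule Fubini(2))
  also have "\<dots> = (LINT t:{0<..}|lborel. Gamma q * (of_real t powr (p - 1) / of_real (exp (1 * t))))"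
    by (intro set_lebesgue_integral_cong) (auto simp: G_y)
  also have "\<dots> = Gamma q * Gamma p"
    unfolding set_integral_mult_right Gamma_integral_scaled(2)[OF p zero_less_one] by simp
  finally show "(LINT y:{0<..}|lborel. of_real y powr (q - 1) / of_real (1 + y) powr (p + q)) =
      Gamma p * Gamma q / Gamma (p + q)"
    using Gpq by (simp add: field_simps)
qed

lemma Beta_integral_complex:
  assumes a: "Re a > 0" and b: "Re b > 0"
  shows "(\<lambda>v. of_real v powr (a - 1) * of_real (1 - v) powr (b - 1)) absolutely_integrable_on {0<..<1}"
    and "integral {0<..<1} (\<lambda>v. of_real v powr (a - 1) * of_real (1 - v) powr (b - 1)) = Beta a b"
proof -
  let ?h = "\<lambda>y. complex_of_real y powr (a - 1) / of_real (1 + y) powr (b + a)"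
  let ?\<phi> = "\<lambda>v::real. v / (1 - v)"
  have der: "(?\<phi> has_field_derivative (1 / (1 - v)\<^sup>2)) (at v within {0<..<1})" if "v \<in> {0<..<1}" for v
    using that by (auto intro!: derivative_eq_intros simp: field_simps power2_eq_square)
  have inj: "inj_on ?\<phi> {0<..<1}"
    by (auto simp: inj_on_def field_simps)
  have img: "?\<phi> ` {0<..<1} = {0<..}"
  proof safe
    fix y :: real
    assume "y > 0"
    then show "y \<in> ?\<phi> ` {0<..<1}"
      by (intro image_eqI[of _ _ "y / (1 + y)"]) (auto simp: field_simps)
  qed (auto simp: field_simps)
  have pullback: "\<bar>1 / (1 - v)\<^sup>2\<bar> *\<^sub>R ?h (?\<phi> v) = of_real v powr (a - 1) * of_real (1 - v) powr (b - 1)"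
    if "v \<in> {0<..<1}" for v
  proof -
    have v: "v > 0" "1 - v > 0" "?\<phi> v > 0" "1 + ?\<phi> v > 0"
      using that by (auto intro!: add_pos_pos)
    have ln_\<phi>: "ln (?\<phi> v) = ln v - ln (1 - v)"
      using v by (simp add: ln_div)
    have one_plus_\<phi>: "1 + ?\<phi> v = 1 / (1 - v)" and ln_inv: "ln (1 / (1 - v)) = - ln (1 - v)"
      using v by (simp_all add: ln_div field_simps)
    have "exp (2 * ln (1 - v)) = (1 - v)\<^sup>2"
      using v by (subst ln_realpow[symmetric, where n=2, simplified]) auto
    then have jacobian: "\<bar>1 / (1 - v)\<^sup>2\<bar> = exp (- 2 * ln (1 - v))"
      by (simp add: exp_minus inverse_eq_divide)
    show ?thesis
      unfolding scaleR_conv_of_real jacobian complex_powr_real_eq_exp_ln[OF v(1)]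
        complex_powr_real_eq_exp_ln[OF v(2)] complex_powr_real_eq_exp_ln[OF v(3)]
        complex_powr_real_eq_exp_ln[OF v(4)]
      unfolding one_plus_\<phi> ln_inv ln_\<phi> exp_of_real[symmetric]
      by (simp add: exp_add[symmetric] exp_diff[symmetric] algebra_simps)
  qed
  note halfline = Beta_integral_halfline[OF b a]
  have "?h absolutely_integrable_on ?\<phi> ` {0<..<1} \<and> integral (?\<phi> ` {0<..<1}) ?h = Beta a b"
    unfolding img using set_integrable_lborel_imp_absolutely_integrable[OF halfline(1)]
      set_borel_integral_eq_integral(2)[OF halfline(1)] halfline(2) a b
    by (simp add: Beta_def add.commute mult.commute)
  then have "(\<lambda>v. \<bar>1 / (1 - v)\<^sup>2\<bar> *\<^sub>R ?h (?\<phi> v)) absolutely_integrable_on {0<..<1} \<and>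
      integral {0<..<1} (\<lambda>v. \<bar>1 / (1 - v)\<^sup>2\<bar> *\<^sub>R ?h (?\<phi> v)) = Beta a b"
    using has_absolute_integral_change_of_variables_real[OF _ der inj, of ?h "Beta a b"] by simp
  moreover have "(\<lambda>v. \<bar>1 / (1 - v)\<^sup>2\<bar> *\<^sub>R ?h (?\<phi> v)) absolutely_integrable_on {0<..<1} \<longleftrightarrow>
      (\<lambda>v. of_real v powr (a - 1) * of_real (1 - v) powr (b - 1)) absolutely_integrable_on {0<..<1}"
    by (intro set_integrable_cong refl pullback)
  moreover have "integral {0<..<1} (\<lambda>v. \<bar>1 / (1 - v)\<^sup>2\<bar> *\<^sub>R ?h (?\<phi> v)) =
      integral {0<..<1} (\<lambda>v. of_real v powr (a - 1) * of_real (1 - v) powr (b - 1))"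
    by (intro integral_cong pullback)
  ultimately show "(\<lambda>v. of_real v powr (a - 1) * of_real (1 - v) powr (b - 1)) absolutely_integrable_on {0<..<1}"
    and "integral {0<..<1} (\<lambda>v. of_real v powr (a - 1) * of_real (1 - v) powr (b - 1)) = Beta a b"
    by simp_all
qed

lemma Beta_integral_linear_weight:
  assumes p: "Re p > 0" and q: "Re q > 0"
  shows "(\<lambda>v. of_real (1 + 3 * v) * (of_real v powr (p - 1) * of_real (1 - v) powr (q - 1)))
           absolutely_integrable_on {0<..<1}"
    and "integral {0<..<1} (\<lambda>v. of_real (1 + 3 * v) * (of_real v powr (p - 1) * of_real (1 - v) powr (q - 1))) =
           (4 * p + q) / (p + q) * Beta p q"
proof -
  let ?B = "\<lambda>a v. complex_of_real v powr (a - 1) * of_real (1 - v) powr (q - 1)"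
  have p1: "Re (p + 1) > 0"
    using p by simp
  have split: "of_real (1 + 3 * v) * ?B p v = ?B p v + 3 * ?B (p + 1) v" if "v \<in> {0<..<1}" for v
    using that complex_powr_real_mult[of v "p - 1" 1] by (simp add: algebra_simps)
  have int_B: "?B a absolutely_integrable_on {0<..<1}" "integral {0<..<1} (?B a) = Beta a q"
    if "Re a > 0" for a
    using Beta_integral_complex[OF that q] by auto
  have "(\<lambda>v. ?B p v + 3 * ?B (p + 1) v) absolutely_integrable_on {0<..<1}"
    using int_B(1)[OF p] set_integrable_mult_right[OF int_B(1)[OF p1], of 3] by (rule set_integral_add)
  moreover have "integral {0<..<1} (\<lambda>v. ?B p v + 3 * ?B (p + 1) v) = Beta p q + 3 * Beta (p + 1) q"
    using int_B[OF p] int_B[OF p1] set_lebesgue_integral_eq_integral(1)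
    by (subst integral_add) (auto simp: integral_mult_right)
  moreover have "Beta p q + 3 * Beta (p + 1) q = (4 * p + q) / (p + q) * Beta p q"
  proof -
    have "p \<notin> \<int>\<^sub>\<le>\<^sub>0" and pq: "p + q \<noteq> 0"
      using p q by (auto elim!: nonpos_Ints_cases simp: complex_eq_iff)
    then have Beta_succ: "Beta (p + 1) q = p * Beta p q / (p + q)"
      using Beta_plus1_left[of p q] by (simp add: eq_divide_eq mult.commute)
    show ?thesis
      unfolding Beta_succ using pq by (simp add: divide_simps) (simp add: algebra_simps)
  qed
  moreover have "(\<lambda>v. of_real (1 + 3 * v) * ?B p v) absolutely_integrable_on {0<..<1} \<longleftrightarrow>
      (\<lambda>v. ?B p v + 3 * ?B (p + 1) v) absolutely_integrable_on {0<..<1}"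
    by (intro set_integrable_cong refl split)
  moreover have "integral {0<..<1} (\<lambda>v. of_real (1 + 3 * v) * ?B p v) =
      integral {0<..<1} (\<lambda>v. ?B p v + 3 * ?B (p + 1) v)"
    by (intro integral_cong split)
  ultimately show "(\<lambda>v. of_real (1 + 3 * v) * ?B p v) absolutely_integrable_on {0<..<1}"
    and "integral {0<..<1} (\<lambda>v. of_real (1 + 3 * v) * ?B p v) = (4 * p + q) / (p + q) * Beta p q"
    by simp_all
qed

section \<open>Functions differentiable up to a given order\<close>

definition differentiable_upto :: "nat \<Rightarrow> real set \<Rightarrow> (real \<Rightarrow> real) \<Rightarrow> bool" where
  "differentiable_upto n S g \<longleftrightarrow> (\<forall>k\<le>n. \<forall>x\<in>S. (deriv ^^ k) g differentiable (at x))"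

lemma smooth_on_real_iff_differentiable_upto:
  "smooth_on_real S g \<longleftrightarrow> (\<forall>n. differentiable_upto n S g)"
  unfolding smooth_on_real_def differentiable_upto_def by blast

lemma differentiable_upto_0: "differentiable_upto 0 S g \<longleftrightarrow> (\<forall>x\<in>S. g differentiable (at x))"
  by (simp add: differentiable_upto_def)

lemma differentiable_upto_Suc:
  "differentiable_upto (Suc n) S g \<longleftrightarrow>
     (\<forall>x\<in>S. g differentiable (at x)) \<and> differentiable_upto n S (deriv g)"
proof -
  have "(\<forall>k\<le>Suc n. P k) \<longleftrightarrow> P 0 \<and> (\<forall>k\<le>n. P (Suc k))" for P
    by (metis Suc_le_mono le0 not0_implies_Suc)
  then show ?thesis
    unfolding differentiable_upto_def by (simp add: funpow_Suc_right del: funpow.simps)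
qed

lemma differentiable_upto_mono: "differentiable_upto n S g \<Longrightarrow> m \<le> n \<Longrightarrow> differentiable_upto m S g"
  unfolding differentiable_upto_def by auto

lemma differentiable_upto_subset: "differentiable_upto n S g \<Longrightarrow> T \<subseteq> S \<Longrightarrow> differentiable_upto n T g"
  unfolding differentiable_upto_def by auto

lemma differentiable_at_transform_open:
  fixes g h :: "real \<Rightarrow> real"
  assumes "open S" "x \<in> S" "\<And>y. y \<in> S \<Longrightarrow> g y = h y" "g differentiable (at x)"
  shows "h differentiable (at x)"
  using assms unfolding real_differentiable_def by (metis has_field_derivative_transform_within_open)

lemma differentiable_upto_cong:
  assumes S: "open S" and eq: "\<And>x. x \<in> S \<Longrightarrow> g x = h x" and g: "differentiable_upto n S g"
  shows "differentiable_upto n S h"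
  using eq g
proof (induction n arbitrary: g h)
  case 0
  then show ?case
    unfolding differentiable_upto_0 using differentiable_at_transform_open[OF S] by blast
next
  case (Suc n)
  have "deriv g x = deriv h x" if "x \<in> S" for x
    using S that Suc.prems(1)
    by (intro deriv_cong_ev eventually_nhds_in_open[THEN eventually_mono]) auto
  then show ?case
    using Suc differentiable_at_transform_open[OF S] unfolding differentiable_upto_Suc by blast
qed

lemma differentiable_upto_SucI:
  assumes S: "open S" and g: "\<And>x. x \<in> S \<Longrightarrow> (g has_real_derivative g' x) (at x)"
    and g': "differentiable_upto n S g'"
  shows "differentiable_upto (Suc n) S g"
proof -
  have "differentiable_upto n S (deriv g)"
    by (rule differentiable_upto_cong[OF S _ g']) (metis g DERIV_imp_deriv)
  then show ?thesis
    using g unfolding differentiable_upto_Suc real_differentiable_def by blast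
qed

lemma differentiable_upto_has_deriv:
  "differentiable_upto (Suc n) S g \<Longrightarrow> x \<in> S \<Longrightarrow> (g has_real_derivative deriv g x) (at x)"
  unfolding differentiable_upto_Suc by (simp add: DERIV_deriv_iff_real_differentiable)

lemma differentiable_upto_const: "differentiable_upto n S (\<lambda>x. a)"
proof (induction n arbitrary: a)
  case (Suc n)
  have "deriv (\<lambda>x. a) = (\<lambda>x. 0)"
    by (simp add: fun_eq_iff)
  then show ?case
    unfolding differentiable_upto_Suc using Suc.IH by simp
qed (simp add: differentiable_upto_0)

lemma differentiable_upto_ident: "differentiable_upto n S (\<lambda>x. x)"
proof (cases n)
  case (Suc m)
  have "deriv (\<lambda>x. x) = (\<lambda>x. 1::real)"
    by (simp add: fun_eq_iff)
  then show ?thesis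
    unfolding Suc differentiable_upto_Suc using differentiable_upto_const by simp
qed (simp add: differentiable_upto_0)

lemma differentiable_upto_add:
  assumes "open S" "differentiable_upto n S g" "differentiable_upto n S h"
  shows "differentiable_upto n S (\<lambda>x. g x + h x)"
  using assms(2,3)
proof (induction n arbitrary: g h)
  case 0
  then show ?case unfolding differentiable_upto_0 by auto
next
  case (Suc n)
  show ?case
  proof (rule differentiable_upto_SucI[OF assms(1)])
    show "((\<lambda>x. g x + h x) has_real_derivative deriv g x + deriv h x) (at x)" if "x \<in> S" for x
      using that Suc.prems by (intro DERIV_add differentiable_upto_has_deriv)
    show "differentiable_upto n S (\<lambda>x. deriv g x + deriv h x)"
      using Suc by (simp add: differentiable_upto_Suc)
  qed
qed

lemma differentiable_upto_mult:
  assumes "open S" "differentiable_upto n S g" "differentiable_upto n S h"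
  shows "differentiable_upto n S (\<lambda>x. g x * h x)"
  using assms(2,3)
proof (induction n arbitrary: g h)
  case 0
  then show ?case unfolding differentiable_upto_0 by auto
next
  case (Suc n)
  have "differentiable_upto n S g" "differentiable_upto n S h"
    using Suc.prems differentiable_upto_mono by auto
  show ?case
  proof (rule differentiable_upto_SucI[OF assms(1)])
    show "((\<lambda>x. g x * h x) has_real_derivative deriv g x * h x + deriv h x * g x) (at x)" if "x \<in> S" for x
      using that Suc.prems by (intro DERIV_mult differentiable_upto_has_deriv)
    show "differentiable_upto n S (\<lambda>x. deriv g x * h x + deriv h x * g x)"
      using Suc \<open>differentiable_upto n S g\<close> \<open>differentiable_upto n S h\<close>
      by (intro differentiable_upto_add[OF assms(1)]) (simp_all add: differentiable_upto_Suc)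
  qed
qed

lemma differentiable_upto_compose:
  assumes S: "open S" and img: "\<And>x. x \<in> S \<Longrightarrow> h x \<in> T"
  shows "differentiable_upto n T g \<Longrightarrow> differentiable_upto n S h \<Longrightarrow> differentiable_upto n S (\<lambda>x. g (h x))"
proof (induction n arbitrary: g)
  case 0
  show ?case
    unfolding differentiable_upto_0
  proof
    fix x
    assume x: "x \<in> S"
    have "(g has_real_derivative deriv g (h x)) (at (h x))" "(h has_real_derivative deriv h x) (at x)"
      using 0 img[OF x] x by (auto simp: differentiable_upto_0 DERIV_deriv_iff_real_differentiable)
    then show "(\<lambda>x. g (h x)) differentiable at x"
      using DERIV_chain2 real_differentiable_def by blast
  qed
next
  case (Suc n)
  have h: "differentiable_upto n S h"
    using Suc.prems differentiable_upto_mono by auto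
  show ?case
  proof (rule differentiable_upto_SucI[OF S])
    show "((\<lambda>x. g (h x)) has_real_derivative deriv g (h x) * deriv h x) (at x)" if "x \<in> S" for x
      using differentiable_upto_has_deriv[OF Suc.prems(1) img[OF that]]
        differentiable_upto_has_deriv[OF Suc.prems(2) that]
      by (rule DERIV_chain2)
    have "differentiable_upto n T (deriv g)"
      using Suc.prems(1) by (simp add: differentiable_upto_Suc)
    then have "differentiable_upto n S (\<lambda>x. deriv g (h x))"
      using h by (rule Suc.IH)
    moreover have "differentiable_upto n S (deriv h)"
      using Suc.prems by (simp add: differentiable_upto_Suc)
    ultimately show "differentiable_upto n S (\<lambda>x. deriv g (h x) * deriv h x)"
      by (rule differentiable_upto_mult[OF S])
  qed
qed

lemma differentiable_upto_inverse: "differentiable_upto n (-{0}) (\<lambda>x::real. inverse x)"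
proof (induction n)
  case 0
  then show ?case
    unfolding differentiable_upto_0 by (auto intro!: derivative_eq_intros simp: real_differentiable_def)
next
  case (Suc n)
  show ?case
  proof (rule differentiable_upto_SucI)
    show "((\<lambda>x. inverse x) has_real_derivative (-1) * (inverse x * inverse x)) (at x)" if "x \<in> -{0}" for x :: real
      using that by (auto intro!: derivative_eq_intros simp: power2_eq_square)
    show "differentiable_upto n (-{0}) (\<lambda>x::real. (-1) * (inverse x * inverse x))"
      by (intro differentiable_upto_mult differentiable_upto_const Suc.IH) auto
  qed auto
qed

lemma differentiable_upto_exp: "differentiable_upto n S (\<lambda>x::real. exp x)"
proof -
  have "differentiable_upto n UNIV (\<lambda>x::real. exp x)"
  proof (induction n)
    case 0
    then show ?case
      unfolding differentiable_upto_0 by (auto intro!: derivative_eq_intros simp: real_differentiable_def)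
  next
    case (Suc n)
    then show ?case
      by (intro differentiable_upto_SucI) (auto intro!: derivative_eq_intros)
  qed
  then show ?thesis
    by (rule differentiable_upto_subset) simp
qed

lemma differentiable_upto_ln: "differentiable_upto n {0<..} (\<lambda>x::real. ln x)"
proof (cases n)
  case 0
  then show ?thesis
    unfolding 0 differentiable_upto_0 by (auto intro!: derivative_eq_intros simp: real_differentiable_def)
next
  case (Suc m)
  show ?thesis
    unfolding Suc
  proof (rule differentiable_upto_SucI)
    show "((\<lambda>x. ln x) has_real_derivative inverse x) (at x)" if "x \<in> {0<..}" for x :: real
      using that by (auto intro!: derivative_eq_intros simp: field_simps)
    show "differentiable_upto m {0<..} (\<lambda>x::real. inverse x)"
      by (rule differentiable_upto_subset[OF differentiable_upto_inverse]) auto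
  qed auto
qed

section \<open>The constant \<open>c_formula\<close>\<close>

lemma real_pos_not_nonpos_Ints: "(x::real) > 0 \<Longrightarrow> x \<notin> \<int>\<^sub>\<le>\<^sub>0"
  by (auto dest: nonpos_Ints_nonpos)

lemma c_formula_eq_inverse_Beta:
  assumes "1/2 < \<sigma>" "\<sigma> < 1"
  shows "c_formula \<sigma> = 1 / Beta (1 - 1/(2*\<sigma>)) (2/\<sigma> - 1)"
proof -
  have "1 - 1/(2*\<sigma>) + (2/\<sigma> - 1) = 3 / (2*\<sigma>)"
    using assms by (simp add: field_simps)
  then show ?thesis
    unfolding c_formula_def Beta_def by simp
qed

lemma Beta_half_three: "Beta (1/2) (3::real) = 16/15"
proof -
  have "(1/2::real) \<notin> \<int>\<^sub>\<le>\<^sub>0" "(3/2::real) \<notin> \<int>\<^sub>\<le>\<^sub>0" "(5/2::real) \<notin> \<int>\<^sub>\<le>\<^sub>0"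
    by (auto intro!: real_pos_not_nonpos_Ints)
  from this[THEN Gamma_plus1] have \<Gamma>: "Gamma (1/2 + 3 :: real) = 15/8 * Gamma (1/2)"
    by simp
  have "Gamma (1/2::real) \<noteq> 0"
    using Gamma_real_pos[of "1/2::real"] by fastforce
  then show ?thesis
    unfolding Beta_def \<Gamma> by (simp add: Gamma_numeral)
qed

lemma c_formula_less_one:
  assumes "1/2 < \<sigma>" "\<sigma> < 1"
  shows "c_formula \<sigma> < 1"
proof -
  have a: "0 < 1 - 1/(2*\<sigma>)" "1 - 1/(2*\<sigma>) \<le> 1/2" and b: "0 < 2/\<sigma> - 1" "2/\<sigma> - 1 \<le> 3"
    using assms by (auto simp: field_simps)
  have "16/15 \<le> Beta (1 - 1/(2*\<sigma>)) (2/\<sigma> - 1)"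
    using Beta_real_mono[OF a b] Beta_half_three by simp
  then show ?thesis
    unfolding c_formula_eq_inverse_Beta[OF assms] by (simp add: field_simps)
qed

lemma c_formula_tendsto_left_one: "(c_formula \<longlongrightarrow> 1/2) (at_left 1)"
proof -
  have "(1/2::real) \<notin> \<int>\<^sub>\<le>\<^sub>0" "(3/2::real) \<notin> \<int>\<^sub>\<le>\<^sub>0" "(1::real) \<notin> \<int>\<^sub>\<le>\<^sub>0"
    by (auto intro!: real_pos_not_nonpos_Ints)
  then have "(c_formula \<longlongrightarrow> c_formula 1) (at 1)"
    unfolding c_formula_def[abs_def] by (intro tendsto_intros) (auto simp: Gamma_eq_zero_iff)
  moreover have "c_formula 1 = 1/2"
  proof -
    have "Gamma (3/2::real) = 1/2 * Gamma (1/2)"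
      using Gamma_plus1[OF \<open>(1/2::real) \<notin> \<int>\<^sub>\<le>\<^sub>0\<close>] by simp
    moreover have "Gamma (1/2::real) \<noteq> 0"
      using Gamma_real_pos[of "1/2::real"] by fastforce
    ultimately show ?thesis
      by (simp add: c_formula_def)
  qed
  ultimately have "(c_formula \<longlongrightarrow> 1/2) (at 1)"
    by simp
  then show ?thesis
    by (rule tendsto_mono[OF at_le, rotated]) simp
qed

lemma c_formula_asymp_equiv_right_half: "c_formula \<sim>[at_right (1/2)] (\<lambda>t. 2*t - 1)"
proof (rule asymp_equivI')
  \<comment> \<open>The pole of \<open>Gamma (1 - 1/(2*\<sigma>))\<close> at \<open>\<sigma> = 1/2\<close> is removed by \<open>Gamma (e + 1) = e * Gamma e\<close>.\<close>
  define G where "G \<sigma> = Gamma (3 / (2*\<sigma>)) / (2 * \<sigma> * Gamma (1 - 1/(2*\<sigma>) + 1) * Gamma (2/\<sigma> - 1))"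
    for \<sigma> :: real
  have "(3::real) \<notin> \<int>\<^sub>\<le>\<^sub>0" "(1::real) \<notin> \<int>\<^sub>\<le>\<^sub>0"
    by (auto intro!: real_pos_not_nonpos_Ints)
  then have "(G \<longlongrightarrow> G (1/2)) (at_right (1/2))"
    unfolding G_def[abs_def] by (intro tendsto_intros) (auto simp: Gamma_eq_zero_iff)
  moreover have "G (1/2) = 1"
    by (simp add: G_def Gamma_numeral)
  ultimately have lim: "(G \<longlongrightarrow> 1) (at_right (1/2))"
    by simp
  have "G \<sigma> = c_formula \<sigma> / (2 * \<sigma> - 1)" if "1/2 < \<sigma>" for \<sigma>
  proof -
    define e where "e = 1 - 1/(2*\<sigma>)"
    have "e > 0" and e: "2 * \<sigma> * e = 2 * \<sigma> - 1"
      using that by (simp_all add: e_def field_simps)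
    then have "G \<sigma> = Gamma (3 / (2*\<sigma>)) / ((2 * \<sigma> * e) * Gamma e * Gamma (2/\<sigma> - 1))"
      unfolding G_def e_def[symmetric] Gamma_plus1[OF real_pos_not_nonpos_Ints[OF \<open>e > 0\<close>]]
      by (simp add: mult_ac)
    then show ?thesis
      unfolding e c_formula_def e_def by (simp add: field_simps)
  qed
  then have "eventually (\<lambda>\<sigma>. G \<sigma> = c_formula \<sigma> / (2 * \<sigma> - 1)) (at_right (1/2))"
    unfolding eventually_at_right_field by (intro exI[of _ 1]) auto
  then show "((\<lambda>x. c_formula x / (2 * x - 1)) \<longlongrightarrow> 1) (at_right (1/2))"
    using lim by (simp add: tendsto_cong)
qed

section \<open>Solutions of the profile equation\<close>

locale profile_equation =
  fixes \<sigma> c :: real and f :: "real \<Rightarrow> real"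
  assumes \<sigma>: "1/2 < \<sigma>" "\<sigma> < 1" and c_pos: "c > 0"
    and f_cont: "continuous_on {0<..} f"
    and f_range: "\<forall>x>0. 0 < f x \<and> f x < 1"
    and f_eq: "\<forall>x>0. f x / (1 - (f x)\<^sup>2)\<^sup>2 = (c / x) powr \<sigma>"
begin

lemma \<sigma>_pos: "\<sigma> > 0"
  using \<sigma> by simp

lemma f_pos: "x > 0 \<Longrightarrow> f x > 0" and f_less_one: "x > 0 \<Longrightarrow> f x < 1"
  using f_range by auto

lemma one_minus_square_pos: "0 < y \<Longrightarrow> y < 1 \<Longrightarrow> 0 < 1 - (y::real)\<^sup>2"
  by (simp add: abs_square_less_1)

definition X :: "real \<Rightarrow> real" where
  "X y = c * exp ((2 * ln (1 - y\<^sup>2) - ln y) / \<sigma>)"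

lemma X_pos: "X y > 0"
  unfolding X_def using c_pos by simp

lemma X_f: assumes x: "x > 0" shows "X (f x) = x"
proof -
  have y: "0 < f x" "0 < 1 - (f x)\<^sup>2"
    using f_pos f_less_one one_minus_square_pos x by auto
  have "ln (f x) - 2 * ln (1 - (f x)\<^sup>2) = \<sigma> * (ln c - ln x)"
    using arg_cong[OF f_eq[rule_format, OF x], of ln] y x c_pos
    by (simp add: ln_div ln_realpow ln_powr)
  then have "(2 * ln (1 - (f x)\<^sup>2) - ln (f x)) / \<sigma> = ln x - ln c"
    using \<sigma>_pos by (simp add: field_simps)
  then show ?thesis
    unfolding X_def using x c_pos by (simp add: exp_diff)
qed

lemma X_strict_decreasing:
  assumes "0 < y1" "y1 < y2" "y2 < 1"
  shows "X y2 < X y1"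
proof -
  have "1 - y2\<^sup>2 < 1 - y1\<^sup>2"
    using assms power_strict_mono[of y1 y2 2] by auto
  then have "ln (1 - y2\<^sup>2) < ln (1 - y1\<^sup>2)" "ln y1 < ln y2"
    using assms one_minus_square_pos[of y2] by auto
  then have "(2 * ln (1 - y2\<^sup>2) - ln y2) / \<sigma> < (2 * ln (1 - y1\<^sup>2) - ln y1) / \<sigma>"
    using \<sigma>_pos by (intro divide_strict_right_mono) auto
  then show ?thesis
    unfolding X_def using c_pos by simp
qed

lemma X_inj: "0 < y1 \<Longrightarrow> y1 < 1 \<Longrightarrow> 0 < y2 \<Longrightarrow> y2 < 1 \<Longrightarrow> X y1 = X y2 \<Longrightarrow> y1 = y2"
  by (metis X_strict_decreasing less_irrefl linorder_neqE_linordered_idom)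

lemma f_X: assumes "0 < y" "y < 1" shows "f (X y) = y"
  using X_inj[of "f (X y)" y] X_f[OF X_pos] f_pos[OF X_pos] f_less_one[OF X_pos] assms by auto

lemma f_strict_decreasing: assumes "0 < x" "x < x'" shows "f x' < f x"
proof (rule ccontr)
  assume "\<not> f x' < f x"
  moreover have "f x \<noteq> f x'"
    using X_f assms by (metis less_irrefl less_trans)
  ultimately have "X (f x') < X (f x)"
    using f_pos f_less_one assms by (intro X_strict_decreasing) auto
  then show False
    using X_f assms by simp
qed

lemma f_bij: "bij_betw f {0<..} {0<..<1}"
proof (rule bij_betw_imageI)
  show "inj_on f {0<..}"
    by (rule inj_onI) (metis X_f greaterThan_iff)
  show "f ` {0<..} = {0<..<1}"
  proof safe
    fix y :: real
    assume "y \<in> {0<..<1}"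
    then show "y \<in> f ` {0<..}"
      using f_X X_pos by (intro image_eqI[of _ _ "X y"]) auto
  qed (use f_pos f_less_one in auto)
qed

lemma f_le_power: "x > 0 \<Longrightarrow> f x \<le> (c / x) powr \<sigma>"
proof -
  assume x: "x > 0"
  have d: "0 < (1 - (f x)\<^sup>2)\<^sup>2" "(1 - (f x)\<^sup>2)\<^sup>2 \<le> 1"
    using f_pos[OF x] f_less_one[OF x] one_minus_square_pos[of "f x"] by (auto simp: power_le_one)
  have "f x = (c / x) powr \<sigma> * (1 - (f x)\<^sup>2)\<^sup>2"
    using f_eq x d by (auto simp: field_simps)
  also have "\<dots> \<le> (c / x) powr \<sigma> * 1"
    using d by (intro mult_left_mono) auto
  finally show ?thesis
    by simp
qed

lemma power_half_eq: assumes x: "x > 0" shows "(x / c) powr (\<sigma>/2) = (1 - (f x)\<^sup>2) / sqrt (f x)"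
proof -
  have y: "0 < f x" "0 < 1 - (f x)\<^sup>2"
    using f_pos f_less_one one_minus_square_pos x by auto
  have "(x / c) powr (\<sigma>/2) = ((x / c) powr \<sigma>) powr (1/2)"
    using x c_pos by (simp add: powr_powr)
  also have "(x / c) powr \<sigma> = inverse ((c / x) powr \<sigma>)"
    using x c_pos by (simp add: powr_divide)
  also have "(c / x) powr \<sigma> = f x / (1 - (f x)\<^sup>2)\<^sup>2"
    using f_eq x by simp
  also have "(inverse (f x / (1 - (f x)\<^sup>2)\<^sup>2)) powr (1/2) = sqrt ((1 - (f x)\<^sup>2)\<^sup>2 / f x)"
    using y by (simp add: powr_half_sqrt)
  also have "\<dots> = (1 - (f x)\<^sup>2) / sqrt (f x)"
    using y by (simp add: real_sqrt_divide)
  finally show ?thesis .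
qed

lemma one_minus_f_bounds:
  assumes x: "x > 0"
  shows "min (1/2) (1/4 * (x / c) powr (\<sigma>/2)) \<le> 1 - f x \<and> 1 - f x \<le> (x / c) powr (\<sigma>/2)"
proof -
  define y where "y = f x"
  have y: "0 < y" "y < 1"
    using f_pos f_less_one x by (auto simp: y_def)
  have e: "(x / c) powr (\<sigma>/2) = (1 - y) * (1 + y) / sqrt y"
    using power_half_eq[OF x] by (simp add: y_def power2_eq_square algebra_simps)
  have sy: "0 < sqrt y" "sqrt y < 1"
    using y by auto
  have "sqrt y \<le> 1 + y"
    using sy y by linarith
  then have "(1 - y) * sqrt y \<le> (1 - y) * (1 + y)"
    using y by (intro mult_left_mono) auto
  then have upper: "1 - y \<le> (1 - y) * (1 + y) / sqrt y"
    using sy by (simp add: field_simps)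
  have lower: "min (1/2) (1/4 * ((1 - y) * (1 + y) / sqrt y)) \<le> 1 - y"
  proof (cases "y \<le> 1/2")
    case False
    then have "sqrt (1/4) < sqrt y"
      by (intro real_sqrt_less_mono) auto
    then have "1 + y \<le> 4 * sqrt y"
      using y by (simp add: real_sqrt_divide)
    then have "(1 - y) * (1 + y) \<le> (1 - y) * (4 * sqrt y)"
      using y by (intro mult_left_mono) auto
    then have "1/4 * ((1 - y) * (1 + y) / sqrt y) \<le> 1 - y"
      using sy by (simp add: field_simps)
    then show ?thesis
      by (simp add: min_le_iff_disj)
  qed (simp add: min_le_iff_disj)
  show ?thesis
    unfolding e y_def[symmetric] using upper lower by simp
qed

definition Y :: "real \<Rightarrow> real" where
  "Y v = c * exp ((2 * ln (1 - v) - ln v / 2) / \<sigma>)"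

lemma Y_eq_X_sqrt: assumes "0 < v" "v < 1" shows "Y v = X (sqrt v)"
  using assms unfolding X_def Y_def by (simp add: ln_sqrt)

lemma Y_pos: "Y v > 0"
  unfolding Y_def using c_pos by simp

lemma f_Y: "0 < v \<Longrightarrow> v < 1 \<Longrightarrow> f (Y v) = sqrt v"
  using Y_eq_X_sqrt f_X by simp

lemma Y_has_field_derivative:
  assumes "0 < v" "v < 1"
  shows "(Y has_field_derivative - (Y v * (1 + 3 * v) / (2 * \<sigma> * v * (1 - v)))) (at v within S)"
proof -
  have "(Y has_field_derivative Y v * ((2 * (-1 / (1 - v)) - (1 / v) / 2) / \<sigma>)) (at v within S)"
    unfolding Y_def using assms \<sigma>_pos by (auto intro!: derivative_eq_intros)
  moreover have "Y v * ((2 * (-1 / (1 - v)) - (1 / v) / 2) / \<sigma>) = - (Y v * (1 + 3 * v) / (2 * \<sigma> * v * (1 - v)))"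
    using assms \<sigma>_pos by (simp add: field_simps)
  ultimately show ?thesis
    by simp
qed

lemma Y_inj: "inj_on Y {0<..<1}"
proof (rule inj_onI)
  fix u v :: real
  assume "u \<in> {0<..<1}" "v \<in> {0<..<1}" "Y u = Y v"
  then have "sqrt u = sqrt v"
    using Y_eq_X_sqrt X_inj[of "sqrt u" "sqrt v"] by auto
  then show "u = v"
    by simp
qed

lemma Y_image: "Y ` {0<..<1} = {0<..}"
proof
  show "{0<..} \<subseteq> Y ` {0<..<1}"
  proof
    fix x :: real
    assume x: "x \<in> {0<..}"
    then have "(f x)\<^sup>2 \<in> {0<..<1}" "Y ((f x)\<^sup>2) = x"
      using f_pos[of x] f_less_one[of x] one_minus_square_pos[of "f x"] Y_eq_X_sqrt[of "(f x)\<^sup>2"] X_f[of x]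
      by auto
    then show "x \<in> Y ` {0<..<1}"
      by (metis image_eqI)
  qed
qed (use Y_pos in auto)

lemma Y_jacobian_times_power:
  assumes v: "0 < v" "v < 1"
  shows "complex_of_real (Y v * (1 + 3 * v) / (2 * \<sigma> * v * (1 - v))) * of_real (Y v) powr (s - 1) =
     of_real c powr s / (2 * of_real \<sigma>) * of_real (1 + 3 * v) *
       (of_real v powr (- s / (2 * of_real \<sigma>) - 1) * of_real (1 - v) powr (2 * s / of_real \<sigma> - 1))"
proof -
  have v1: "1 - v > 0"
    using v by simp
  have ln_Y: "ln (Y v) = ln c + (2 * ln (1 - v) - ln v / 2) / \<sigma>"
    unfolding Y_def using c_pos by (simp add: ln_mult)
  have "exp (ln (Y v) - ln v - ln (1 - v)) = Y v / (v * (1 - v))"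
    using v Y_pos[of v] by (simp add: exp_diff)
  then have "Y v * (1 + 3 * v) / (2 * \<sigma> * v * (1 - v)) = (1 + 3 * v) / (2 * \<sigma>) * exp (ln (Y v) - ln v - ln (1 - v))"
    by (simp add: field_simps)
  then have "complex_of_real (Y v * (1 + 3 * v) / (2 * \<sigma> * v * (1 - v))) * of_real (Y v) powr (s - 1) =
      of_real ((1 + 3 * v) / (2 * \<sigma>)) * exp (of_real (ln (Y v) - ln v - ln (1 - v)) + (s - 1) * of_real (ln (Y v)))"
    by (simp add: complex_powr_real_eq_exp_ln[OF Y_pos] exp_add flip: exp_of_real)
  also have "of_real (ln (Y v) - ln v - ln (1 - v)) + (s - 1) * of_real (ln (Y v)) =
      s * of_real (ln c) + ((- s / (2 * of_real \<sigma>) - 1) * of_real (ln v) + (2 * s / of_real \<sigma> - 1) * of_real (ln (1 - v)))"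
    unfolding ln_Y using \<sigma>_pos by (simp add: field_simps)
  also have "exp \<dots> = of_real c powr s *
      (of_real v powr (- s / (2 * of_real \<sigma>) - 1) * of_real (1 - v) powr (2 * s / of_real \<sigma> - 1))"
    unfolding complex_powr_real_eq_exp_ln[OF c_pos] complex_powr_real_eq_exp_ln[OF v(1)]
      complex_powr_real_eq_exp_ln[OF v1]
    by (simp add: exp_add mult.commute)
  finally show ?thesis
    using \<sigma>_pos by (simp add: field_simps)
qed

lemma Mellin_transform_eq_Beta:
  fixes K :: "real \<Rightarrow> complex"
  assumes K: "continuous_on {0<..<1} K" and p: "Re p > 0" and q: "Re q > 0"
    and K_eq: "\<And>v. 0 < v \<Longrightarrow> v < 1 \<Longrightarrow>
      K (sqrt v) * (of_real v powr (- s / (2 * of_real \<sigma>) - 1) * of_real (1 - v) powr (2 * s / of_real \<sigma> - 1)) =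
      of_real v powr (p - 1) * of_real (1 - v) powr (q - 1)"
  shows "set_integrable lborel {0<..} (\<lambda>x. K (f x) * of_real x powr (s - 1))"
    and "(LINT x:{0<..}|lborel. K (f x) * of_real x powr (s - 1)) =
         of_real c powr s / (2 * of_real \<sigma>) * ((4 * p + q) / (p + q) * Beta p q)"
proof -
  define F where "F x = K (f x) * of_real x powr (s - 1)" for x
  define C where "C = of_real c powr s / (2 * complex_of_real \<sigma>)"
  define B where "B v = of_real (1 + 3 * v) * (complex_of_real v powr (p - 1) * of_real (1 - v) powr (q - 1))" for v
  have der: "(Y has_field_derivative - (Y v * (1 + 3 * v) / (2 * \<sigma> * v * (1 - v)))) (at v within {0<..<1})"
    if "v \<in> {0<..<1}" for v
    using that by (intro Y_has_field_derivative) auto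
  have pullback: "\<bar>- (Y v * (1 + 3 * v) / (2 * \<sigma> * v * (1 - v)))\<bar> *\<^sub>R F (Y v) = C * B v"
    if "v \<in> {0<..<1}" for v
  proof -
    have v: "0 < v" "v < 1"
      using that by auto
    have "Y v * (1 + 3 * v) / (2 * \<sigma> * v * (1 - v)) \<ge> 0"
      using v Y_pos[of v] \<sigma>_pos by simp
    then have "\<bar>- (Y v * (1 + 3 * v) / (2 * \<sigma> * v * (1 - v)))\<bar> *\<^sub>R F (Y v) =
        complex_of_real (Y v * (1 + 3 * v) / (2 * \<sigma> * v * (1 - v))) * (K (sqrt v) * of_real (Y v) powr (s - 1))"
      unfolding F_def f_Y[OF v] by (simp only: abs_minus_cancel abs_of_nonneg scaleR_conv_of_real)
    also have "\<dots> = K (sqrt v) *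
        (complex_of_real (Y v * (1 + 3 * v) / (2 * \<sigma> * v * (1 - v))) * of_real (Y v) powr (s - 1))"
      by (simp only: ac_simps)
    also have "\<dots> = C * of_real (1 + 3 * v) * (K (sqrt v) *
        (of_real v powr (- s / (2 * of_real \<sigma>) - 1) * of_real (1 - v) powr (2 * s / of_real \<sigma> - 1)))"
      unfolding Y_jacobian_times_power[OF v] C_def by (simp only: ac_simps)
    also have "\<dots> = C * B v"
      unfolding K_eq[OF v] B_def by (simp only: ac_simps)
    finally show ?thesis .
  qed
  have "(\<lambda>v. C * B v) absolutely_integrable_on {0<..<1}"
    using Beta_integral_linear_weight(1)[OF p q] unfolding B_def by (rule set_integrable_mult_right)
  moreover have "integral {0<..<1} (\<lambda>v. C * B v) = C * ((4 * p + q) / (p + q) * Beta p q)"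
    using Beta_integral_linear_weight(2)[OF p q] unfolding B_def by (simp add: integral_mult_right)
  moreover have "(\<lambda>v. \<bar>- (Y v * (1 + 3 * v) / (2 * \<sigma> * v * (1 - v)))\<bar> *\<^sub>R F (Y v)) absolutely_integrable_on {0<..<1}
      \<longleftrightarrow> (\<lambda>v. C * B v) absolutely_integrable_on {0<..<1}"
    by (intro set_integrable_cong refl pullback)
  moreover have "integral {0<..<1} (\<lambda>v. \<bar>- (Y v * (1 + 3 * v) / (2 * \<sigma> * v * (1 - v)))\<bar> *\<^sub>R F (Y v)) =
      integral {0<..<1} (\<lambda>v. C * B v)"
    by (intro integral_cong pullback)
  ultimately have F_int: "F absolutely_integrable_on {0<..}" "integral {0<..} F = C * ((4 * p + q) / (p + q) * Beta p q)"
    using has_absolute_integral_change_of_variables_real[OF _ der Y_inj, of F] unfolding Y_image by auto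
  have "continuous_on {0<..} F"
    unfolding F_def using f_pos f_less_one
    by (intro continuous_intros continuous_on_compose2[OF K f_cont]) auto
  then show F_lborel: "set_integrable lborel {0<..} (\<lambda>x. K (f x) * of_real x powr (s - 1))"
    using F_int(1) unfolding F_def by (intro absolutely_integrable_imp_set_integrable_lborel) auto
  show "(LINT x:{0<..}|lborel. K (f x) * of_real x powr (s - 1)) =
      of_real c powr s / (2 * of_real \<sigma>) * ((4 * p + q) / (p + q) * Beta p q)"
    using set_borel_integral_eq_integral(2)[OF F_lborel] F_int(2) unfolding F_def C_def by simp
qed

lemma Mellin_transform_f:
  assumes s: "0 < Re s" "Re s < \<sigma>"
  shows "set_integrable lborel {0<..} (\<lambda>x. complex_of_real (f x) * complex_of_real x powr (s - 1))"
    and "(LINT x:{0<..}|lborel. complex_of_real (f x) * complex_of_real x powr (s - 1)) =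
         complex_of_real c powr s / (2 * s) *
         (Gamma (1/2 - s / (2 * complex_of_real \<sigma>)) * Gamma (2 * s / complex_of_real \<sigma> + 1) /
          Gamma (3/2 + 3 * s / (2*complex_of_real \<sigma>)))"
proof -
  define p where "p = 1/2 - s / (2 * complex_of_real \<sigma>)"
  define q where "q = 2 * s / complex_of_real \<sigma>"
  have \<sigma>0: "complex_of_real \<sigma> \<noteq> 0"
    using \<sigma>_pos by simp
  have p: "Re p > 0" and q: "Re q > 0"
    unfolding p_def q_def using \<sigma>_pos s by (simp_all add: field_simps)
  have K_eq: "complex_of_real (sqrt v) * (of_real v powr (- s / (2 * of_real \<sigma>) - 1) * of_real (1 - v) powr (2 * s / of_real \<sigma> - 1)) =
      of_real v powr (p - 1) * of_real (1 - v) powr (q - 1)" if "0 < v" for v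
    using complex_powr_real_add_half[OF that, of "- s / (2 * of_real \<sigma>) - 1"]
    by (simp add: p_def q_def algebra_simps)
  note M = Mellin_transform_eq_Beta[of complex_of_real p q s, OF continuous_on_of_real[OF continuous_on_id] p q K_eq]
  show "set_integrable lborel {0<..} (\<lambda>x. complex_of_real (f x) * complex_of_real x powr (s - 1))"
    using M(1) by simp
  have q_nz: "q \<notin> \<int>\<^sub>\<le>\<^sub>0" and pq_nz: "p + q \<notin> \<int>\<^sub>\<le>\<^sub>0" and nz: "p + q \<noteq> 0" "s \<noteq> 0"
    using p q s by (auto elim!: nonpos_Ints_cases simp: complex_eq_iff)
  have \<Gamma>_nz: "Gamma (p + q) \<noteq> 0"
    using p q by (intro Gamma_Re_pos_nonzero) simp
  have four: "4 * p + q = 2" and qs: "q / (2 * s) = 1 / of_real \<sigma>"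
    using \<sigma>0 nz unfolding p_def q_def by (simp_all add: field_simps)
  have "of_real c powr s / (2 * of_real \<sigma>) * ((4 * p + q) / (p + q) * Beta p q) =
      complex_of_real c powr s * (1 / of_real \<sigma>) * (Gamma p * Gamma q / ((p + q) * Gamma (p + q)))"
    unfolding four Beta_def using \<sigma>0 nz \<Gamma>_nz by (simp add: field_simps)
  also have "\<dots> = complex_of_real c powr s / (2 * s) * (Gamma p * (q * Gamma q) / ((p + q) * Gamma (p + q)))"
    unfolding qs[symmetric] using nz \<Gamma>_nz by (simp add: field_simps)
  also have "\<dots> = complex_of_real c powr s / (2 * s) * (Gamma p * Gamma (q + 1) / Gamma ((p + q) + 1))"
    unfolding Gamma_plus1[OF q_nz] Gamma_plus1[OF pq_nz] ..
  finally have "of_real c powr s / (2 * of_real \<sigma>) * ((4 * p + q) / (p + q) * Beta p q) =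
      complex_of_real c powr s / (2 * s) * (Gamma p * Gamma (q + 1) / Gamma ((p + q) + 1))" .
  moreover have "1/2 - s / (2 * complex_of_real \<sigma>) = p" "2 * s / complex_of_real \<sigma> + 1 = q + 1"
    "3/2 + 3 * s / (2 * complex_of_real \<sigma>) = (p + q) + 1"
    unfolding p_def q_def using \<sigma>0 by (simp_all add: field_simps)
  ultimately show "(LINT x:{0<..}|lborel. complex_of_real (f x) * complex_of_real x powr (s - 1)) =
         complex_of_real c powr s / (2 * s) *
         (Gamma (1/2 - s / (2 * complex_of_real \<sigma>)) * Gamma (2 * s / complex_of_real \<sigma> + 1) /
          Gamma (3/2 + 3 * s / (2*complex_of_real \<sigma>)))"
    using M(2) by simp
qed

lemma Mellin_transform_g:
  assumes s: "\<sigma>/2 < Re s" "Re s < 2*\<sigma>"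
  shows "set_integrable lborel {0<..}
           (\<lambda>x. complex_of_real ((f x)\<^sup>2 / (1 - (f x)\<^sup>2)) * complex_of_real x powr (s - 1))"
    and "(LINT x:{0<..}|lborel. complex_of_real ((f x)\<^sup>2 / (1 - (f x)\<^sup>2)) * complex_of_real x powr (s - 1)) =
         complex_of_real c powr s / s *
         (Gamma (1 - s / (2 * complex_of_real \<sigma>)) * Gamma (2 * s / complex_of_real \<sigma> - 1) /
          Gamma (3 * s / (2*complex_of_real \<sigma>)))"
proof -
  define p where "p = 1 - s / (2 * complex_of_real \<sigma>)"
  define q where "q = 2 * s / complex_of_real \<sigma> - 1"
  define K where "K y = complex_of_real (y\<^sup>2 / (1 - y\<^sup>2))" for y :: real
  have \<sigma>0: "complex_of_real \<sigma> \<noteq> 0"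
    using \<sigma>_pos by simp
  have p: "Re p > 0" and q: "Re q > 0"
    unfolding p_def q_def using \<sigma>_pos s by (simp_all add: field_simps)
  have K: "continuous_on {0<..<1} K"
    unfolding K_def using one_minus_square_pos by (intro continuous_intros) force
  have K_eq: "K (sqrt v) * (of_real v powr (- s / (2 * of_real \<sigma>) - 1) * of_real (1 - v) powr (2 * s / of_real \<sigma> - 1)) =
      of_real v powr (p - 1) * of_real (1 - v) powr (q - 1)" if "0 < v" "v < 1" for v
  proof -
    have pv: "of_real v powr (p - 1) = of_real v * of_real v powr (- s / (2 * of_real \<sigma>) - 1)"
      using complex_powr_real_add_one[OF that(1), of "- s / (2 * of_real \<sigma>) - 1"] by (simp add: p_def)
    have qv: "of_real (1 - v) powr (2 * s / of_real \<sigma> - 1) = of_real (1 - v) * of_real (1 - v) powr (q - 1)"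
      using complex_powr_real_add_one[of "1 - v" "q - 1"] that by (simp add: q_def)
    have Kv: "K (sqrt v) = of_real v / of_real (1 - v)"
      using that by (simp add: K_def)
    have "1 - complex_of_real v \<noteq> 0"
      using that by (metis of_real_1 of_real_diff of_real_eq_0_iff less_irrefl right_minus_eq)
    then show ?thesis
      unfolding Kv pv qv by (simp add: field_simps)
  qed
  note M = Mellin_transform_eq_Beta[OF K p q K_eq]
  show "set_integrable lborel {0<..}
           (\<lambda>x. complex_of_real ((f x)\<^sup>2 / (1 - (f x)\<^sup>2)) * complex_of_real x powr (s - 1))"
    using M(1) unfolding K_def .
  have nz: "p + q \<noteq> 0" "s \<noteq> 0"
    using p q s by (auto simp: complex_eq_iff)
  have pq: "p + q = 3 * s / (2 * complex_of_real \<sigma>)" and four: "4 * p + q = 3"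
    using \<sigma>0 unfolding p_def q_def by (simp_all add: field_simps)
  have "of_real c powr s / (2 * of_real \<sigma>) * ((4 * p + q) / (p + q) * Beta p q) =
      complex_of_real c powr s / s * (Gamma p * Gamma q / Gamma (p + q))"
    unfolding four Beta_def using \<sigma>0 nz by (simp add: pq field_simps)
  then show "(LINT x:{0<..}|lborel. complex_of_real ((f x)\<^sup>2 / (1 - (f x)\<^sup>2)) * complex_of_real x powr (s - 1)) =
         complex_of_real c powr s / s *
         (Gamma (1 - s / (2 * complex_of_real \<sigma>)) * Gamma (2 * s / complex_of_real \<sigma> - 1) /
          Gamma (3 * s / (2*complex_of_real \<sigma>)))"
    using M(2) unfolding K_def p_def[symmetric] q_def[symmetric] pq[symmetric] by simp
qed

definition X' :: "real \<Rightarrow> real" where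
  "X' y = - (X y * (1 + 3 * y\<^sup>2) / (\<sigma> * y * (1 - y\<^sup>2)))"

lemma X_has_real_derivative:
  assumes "0 < y" "y < 1"
  shows "(X has_real_derivative X' y) (at y)"
proof -
  have "0 < 1 - y\<^sup>2"
    using assms by (rule one_minus_square_pos)
  then have "(X has_real_derivative X y * ((2 * (- (2 * y) / (1 - y\<^sup>2)) - 1 / y) / \<sigma>)) (at y)"
    unfolding X_def using assms \<sigma>_pos by (auto intro!: derivative_eq_intros simp: power2_eq_square)
  moreover have "X y * ((2 * (- (2 * y) / (1 - y\<^sup>2)) - 1 / y) / \<sigma>) = X' y"
    unfolding X'_def using assms \<open>0 < 1 - y\<^sup>2\<close> \<sigma>_pos
    by (simp add: field_simps) (simp add: algebra_simps power2_eq_square power4_eq_xxxx)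
  ultimately show ?thesis
    by simp
qed

lemma X'_neg: assumes "0 < y" "y < 1" shows "X' y < 0"
proof -
  have "0 < X y * (1 + 3 * y\<^sup>2)" "0 < \<sigma> * y * (1 - y\<^sup>2)"
    using X_pos[of y] \<sigma>_pos one_minus_square_pos[OF assms] assms by (simp_all add: add_pos_nonneg)
  then have "0 < X y * (1 + 3 * y\<^sup>2) / (\<sigma> * y * (1 - y\<^sup>2))"
    by (rule divide_pos_pos)
  then show ?thesis
    unfolding X'_def by simp
qed

lemma X_differentiable_upto: "differentiable_upto n {0<..<1} X"
proof -
  have S: "open {0<..<1::real}"
    by simp
  have "differentiable_upto n {0<..<1} (\<lambda>y. 1 + (-1) * (y * y))"
    by (intro differentiable_upto_add differentiable_upto_mult differentiable_upto_const
        differentiable_upto_ident S)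
  then have "differentiable_upto n {0<..<1} (\<lambda>y. ln (1 + (-1) * (y * y)))"
    using one_minus_square_pos
    by (intro differentiable_upto_compose[OF S _ differentiable_upto_ln]) (auto simp: power2_eq_square)
  moreover have "differentiable_upto n {0<..<1} (\<lambda>y::real. ln y)"
    by (rule differentiable_upto_subset[OF differentiable_upto_ln]) auto
  ultimately have exponent: "differentiable_upto n {0<..<1} (\<lambda>y. (1/\<sigma>) * (2 * ln (1 + (-1) * (y * y)) + (-1) * ln y))"
    by (intro differentiable_upto_add differentiable_upto_mult differentiable_upto_const S)
  have "differentiable_upto n {0<..<1} (\<lambda>y. exp ((1/\<sigma>) * (2 * ln (1 + (-1) * (y * y)) + (-1) * ln y)))"
    by (rule differentiable_upto_compose[OF S _ differentiable_upto_exp exponent, where T = UNIV]) simp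
  then have "differentiable_upto n {0<..<1} (\<lambda>y. c * exp ((1/\<sigma>) * (2 * ln (1 + (-1) * (y * y)) + (-1) * ln y)))"
    by (rule differentiable_upto_mult[OF S differentiable_upto_const])
  moreover have "(\<lambda>y. c * exp ((1/\<sigma>) * (2 * ln (1 + (-1) * (y * y)) + (-1) * ln y))) = X"
    unfolding X_def by (simp add: fun_eq_iff field_simps power2_eq_square)
  ultimately show ?thesis
    by simp
qed

lemma f_has_real_derivative:
  assumes x: "x > 0"
  shows "(f has_real_derivative inverse (X' (f x))) (at x)"
proof (rule DERIV_inverse_function[where f = X and a = 0 and b = "x + 1"])
  show "(X has_real_derivative X' (f x)) (at (f x))"
    using X_has_real_derivative f_pos[OF x] f_less_one[OF x] by blast
  show "X' (f x) \<noteq> 0"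
    using X'_neg f_pos[OF x] f_less_one[OF x] by fastforce
  show "isCont f x"
    using f_cont x by (simp add: continuous_on_eq_continuous_at)
qed (use x X_f in auto)

lemma f_differentiable_upto: "differentiable_upto n {0<..} f"
proof (induction n)
  case 0
  then show ?case
    unfolding differentiable_upto_0 using f_has_real_derivative real_differentiable_def by auto
next
  case (Suc n)
  have S: "open {0<..<1::real}"
    by simp
  have "differentiable_upto n {0<..<1} (deriv X)"
    using X_differentiable_upto[of "Suc n"] unfolding differentiable_upto_Suc by simp
  then have "differentiable_upto n {0<..<1} X'"
    by (intro differentiable_upto_cong[OF S _ \<open>differentiable_upto n {0<..<1} (deriv X)\<close>])
      (simp add: X_has_real_derivative DERIV_imp_deriv)
  then have inv_X': "differentiable_upto n {0<..<1} (\<lambda>y. inverse (X' y))"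
    using X'_neg by (intro differentiable_upto_compose[OF S _ differentiable_upto_inverse]) fastforce
  have f': "differentiable_upto n {0<..} (\<lambda>x. inverse (X' (f x)))"
    by (rule differentiable_upto_compose[OF _ _ inv_X' Suc.IH]) (use f_pos f_less_one in auto)
  show ?case
    by (rule differentiable_upto_SucI[OF _ _ f']) (auto intro: f_has_real_derivative)
qed

lemma c_eq_c_formula:
  assumes fint: "((\<lambda>x. (f x)\<^sup>2 / (1 - (f x)\<^sup>2)) has_integral 1) {0<..}"
  shows "c = c_formula \<sigma>"
proof -
  define g where "g x = (f x)\<^sup>2 / (1 - (f x)\<^sup>2)" for x
  define a where "a = 1 - 1/(2*\<sigma>)"
  define b where "b = 2/\<sigma> - 1"
  have a: "a > 0" and b: "b > 0" and ab: "a + b = 3 / (2*\<sigma>)"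
    using \<sigma> unfolding a_def b_def by (simp_all add: field_simps)
  note M = Mellin_transform_g[of 1, folded g_def]
  have powr_zero: "complex_of_real (g x) * of_real x powr (1 - 1) = of_real (g x)" if "x \<in> {0<..}" for x
    using that by simp
  have "set_integrable lborel {0<..} (\<lambda>x. complex_of_real (g x) * of_real x powr (1 - 1))"
    using M(1) \<sigma> by simp
  also have "?this \<longleftrightarrow> set_integrable lborel {0<..} (\<lambda>x. complex_of_real (g x))"
    by (intro set_integrable_cong refl powr_zero)
  finally have "set_integrable lborel {0<..} g"
    by (simp only: set_integrable_complex_of_real_iff)
  then have "(LINT x:{0<..}|lborel. g x) = 1"
    using set_borel_integral_eq_integral(2) fint integral_unique unfolding g_def by metis
  moreover have "(LINT x:{0<..}|lborel. complex_of_real (g x) * of_real x powr (1 - 1)) =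
      (LINT x:{0<..}|lborel. complex_of_real (g x))"
    by (intro set_lebesgue_integral_cong) (simp_all add: powr_zero)
  ultimately have "1 = (LINT x:{0<..}|lborel. complex_of_real (g x) * of_real x powr (1 - 1))"
    by (simp add: set_integral_complex_of_real)
  also have "\<dots> = of_real c powr 1 / 1 * (Gamma (of_real a) * Gamma (of_real b) / Gamma (of_real (a + b)))"
  proof -
    have "1 - 1 / (2 * complex_of_real \<sigma>) = of_real a" "2 * 1 / complex_of_real \<sigma> - 1 = of_real b"
      "3 * 1 / (2 * complex_of_real \<sigma>) = of_real (a + b)"
      using \<sigma>_pos unfolding ab a_def b_def by (simp_all add: field_simps)
    then show ?thesis
      using M(2) \<sigma> by simp
  qed
  also have "\<dots> = of_real (c * (Gamma a * Gamma b / Gamma (a + b)))"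
    unfolding Gamma_complex_of_real by simp
  finally have "c * (Gamma a * Gamma b / Gamma (a + b)) = 1"
    by (metis of_real_1 of_real_eq_iff)
  then show ?thesis
    using Gamma_real_pos[OF a] Gamma_real_pos[OF b]
    unfolding c_formula_def a_def[symmetric] b_def[symmetric] ab[symmetric]
    by (simp add: field_simps)
qed

lemma Mellin_transform_f_at_one_minus_\<sigma>:
  assumes fint: "((\<lambda>x. (f x)\<^sup>2 / (1 - (f x)\<^sup>2)) has_integral 1) {0<..}"
  shows "(LINT x:{0<..}|lborel. f x * x powr ((1 - \<sigma>) - 1)) = 1 / (2 * (1 - \<sigma>)) * c powr (- \<sigma>)"
proof -
  define a where "a = 1 - 1/(2*\<sigma>)"
  define b where "b = 2/\<sigma> - 1"
  have a: "a > 0" and b: "b > 0" and ab: "a + b = 3 / (2*\<sigma>)"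
    using \<sigma> unfolding a_def b_def by (simp_all add: field_simps)
  have c: "c = Gamma (a + b) / (Gamma a * Gamma b)"
    unfolding ab a_def b_def using c_eq_c_formula[OF fint] by (simp add: c_formula_def)
  have args: "1/2 - of_real (1 - \<sigma>) / (2 * complex_of_real \<sigma>) = of_real a"
    "2 * of_real (1 - \<sigma>) / complex_of_real \<sigma> + 1 = of_real b"
    "3/2 + 3 * of_real (1 - \<sigma>) / (2 * complex_of_real \<sigma>) = of_real (a + b)"
    using \<sigma>_pos unfolding ab a_def b_def by (simp_all add: field_simps)
  have "complex_of_real (LINT x:{0<..}|lborel. f x * x powr ((1 - \<sigma>) - 1)) =
      (LINT x:{0<..}|lborel. complex_of_real (f x) * of_real x powr (of_real (1 - \<sigma>) - 1))"
    by (rule complex_set_integral_real_powr[symmetric])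
  also have "\<dots> = of_real c powr of_real (1 - \<sigma>) / (2 * of_real (1 - \<sigma>)) *
      (Gamma (of_real a) * Gamma (of_real b) / Gamma (of_real (a + b)))"
    using Mellin_transform_f(2)[of "of_real (1 - \<sigma>)"] \<sigma> unfolding args by simp
  also have "\<dots> = of_real (c powr (1 - \<sigma>) / (2 * (1 - \<sigma>)) * (Gamma a * Gamma b / Gamma (a + b)))"
    unfolding powr_of_real[OF less_imp_le[OF c_pos]] Gamma_complex_of_real by simp
  finally have "(LINT x:{0<..}|lborel. f x * x powr ((1 - \<sigma>) - 1)) =
      c powr (1 - \<sigma>) / (2 * (1 - \<sigma>)) * (Gamma a * Gamma b / Gamma (a + b))"
    by (simp only: of_real_eq_iff)
  also have "\<dots> = c powr (1 - \<sigma>) / (2 * (1 - \<sigma>)) * (1 / c)"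
    using a b unfolding c by simp
  also have "\<dots> = 1 / (2 * (1 - \<sigma>)) * c powr (- \<sigma>)"
    using c_pos by (simp add: powr_diff powr_minus field_simps)
  finally show ?thesis .
qed

end

theorem mainTheorem10:
  fixes \<sigma> c :: real and f :: "real \<Rightarrow> real"
  assumes \<sigma>: "1/2 < \<sigma>" "\<sigma> < 1"
    and cpos: "c > 0"
    and fcont: "continuous_on {0<..} f"
    and frange: "\<forall>x>0. 0 < f x \<and> f x < 1"
    and feq: "\<forall>x>0. f x / (1 - (f x)\<^sup>2)\<^sup>2 = (c / x) powr \<sigma>"
    and fint: "((\<lambda>x. (f x)\<^sup>2 / (1 - (f x)\<^sup>2)) has_integral 1) {0<..}"
  shows
    "(smooth_on_real {0<..} f \<and>
     (\<forall>x y. 0 < x \<and> x < y \<longrightarrow> f y < f x) \<and>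
     bij_betw f {0<..} {0<..<1}) \<and>
    (\<forall>x>0. f x \<le> (c / x) powr \<sigma>) \<and>
    (\<forall>x>0. min (1/2) (1/4 * (x / c) powr (\<sigma>/2)) \<le> 1 - f x \<and> 1 - f x \<le> (x / c) powr (\<sigma>/2)) \<and>
    (c = c_formula \<sigma> \<and> c < 1 \<and>
     (c_formula \<longlongrightarrow> 1/2) (at_left 1) \<and>
     c_formula \<sim>[at_right (1/2)] (\<lambda>t. 2*t - 1)) \<and>
    (\<forall>s::complex. 0 < Re s \<and> Re s < \<sigma> \<longrightarrow>
       set_integrable lborel {0<..} (\<lambda>x. complex_of_real (f x) * complex_of_real x powr (s - 1)) \<and>
       (LINT x:{0<..}|lborel. complex_of_real (f x) * complex_of_real x powr (s - 1)) =
         complex_of_real c powr s / (2 * s) *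
         (Gamma (1/2 - s / (2 * complex_of_real \<sigma>)) * Gamma (2 * s / complex_of_real \<sigma> + 1) / Gamma (3/2 + 3 * s / (2*complex_of_real \<sigma>)))) \<and>
    ((LINT x:{0<..}|lborel. f x * x powr ((1 - \<sigma>) - 1)) = 1 / (2 * (1 - \<sigma>)) * c powr (- \<sigma>)) \<and>
    (\<forall>s::complex. \<sigma>/2 < Re s \<and> Re s < 2*\<sigma> \<longrightarrow>
       set_integrable lborel {0<..}
         (\<lambda>x. complex_of_real ((f x)\<^sup>2 / (1 - (f x)\<^sup>2)) * complex_of_real x powr (s - 1)) \<and>
       (LINT x:{0<..}|lborel. complex_of_real ((f x)\<^sup>2 / (1 - (f x)\<^sup>2)) * complex_of_real x powr (s - 1)) =
         complex_of_real c powr s / s *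
         (Gamma (1 - s / (2 * complex_of_real \<sigma>)) * Gamma (2 * s / complex_of_real \<sigma> - 1) / Gamma (3 * s / (2*complex_of_real \<sigma>))))"
proof -
  interpret profile_equation \<sigma> c f
    using assms by unfold_locales auto
  have "smooth_on_real {0<..} f"
    using f_differentiable_upto by (simp add: smooth_on_real_iff_differentiable_upto)
  moreover have "c = c_formula \<sigma>"
    using c_eq_c_formula[OF fint] .
  ultimately show ?thesis
    using f_strict_decreasing f_bij f_le_power one_minus_f_bounds
      c_formula_less_one[OF \<sigma>] c_formula_tendsto_left_one c_formula_asymp_equiv_right_half
      Mellin_transform_f Mellin_transform_f_at_one_minus_\<sigma>[OF fint] Mellin_transform_g
    by blast
qed

end
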